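(* Let $M,N,L$ be weight sequences satisfying $m_k^{1/k}\to\infty$, $n_k^{1/k}\to\infty$, $\ell_k^{1/k}\to\infty$. Assume that there is $A>0$ with $\mu_{2k}\le A\nu_k$ for all $k$, and that there is $C\ge1$ with $\frac{\nu_j}{j}\le C\frac{\lambda_k}{k}$ for all $1\le j\le k$. Then there exists $D\ge1$ such that $2\underline{\Gamma}_\ell(Dt)\le\underline{\Gamma}_m(t)$ for all $t>0$.
   Context: A weight sequence is given by an increasing sequence $1=\mu_0\le\mu_1\le\cdots$ via $M_k=\mu_0\cdots\mu_k=k!\,m_k$, with $M_k^{1/k}\to\infty$; analogously $\nu\leftrightarrow N\leftrightarrow n$ and $\lambda\leftrightarrow L\leftrightarrow\ell$. For a positive sequence $m$ with $m_0=1$ and $m_{k+1}/m_k\to\infty$, $\underline{\Gamma}_m(t)=\min\{k: m_{k+1}/m_k\ge1/t\}$ for $t>0$. *)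

theory Defs
  imports Complex_Main
begin

text \<open>A weight sequence is given by its quotient sequence mu with
  1 = mu 0 <= mu 1 <= ..., M k = mu 0 * ... * mu k, and M k ^ (1/k) tending to infinity.\<close>

definition Mseq :: "(nat \<Rightarrow> real) \<Rightarrow> nat \<Rightarrow> real" where
  "Mseq \<mu> k = (\<Prod>i\<le>k. \<mu> i)"

definition mseq :: "(nat \<Rightarrow> real) \<Rightarrow> nat \<Rightarrow> real" where
  "mseq \<mu> k = Mseq \<mu> k / fact k"

definition weight_sequence :: "(nat \<Rightarrow> real) \<Rightarrow> bool" where
  "weight_sequence \<mu> \<longleftrightarrow> \<mu> 0 = 1 \<and> (\<forall>k. \<mu> k \<le> \<mu> (Suc k)) \<and>
     filterlim (\<lambda>k. root k (Mseq \<mu> k)) at_top sequentially"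

definition Gamma_low :: "(nat \<Rightarrow> real) \<Rightarrow> real \<Rightarrow> nat" where
  "Gamma_low m t = (LEAST k. m (Suc k) / m k \<ge> 1 / t)"

end

theory Submission
  imports Defs
begin

text \<open>Since \<open>m\<^sub>k\<^sub>+\<^sub>1 / m\<^sub>k = \<mu>\<^sub>k\<^sub>+\<^sub>1 / (k+1)\<close>, the index \<open>\<Gamma> = \<underline>\<Gamma>\<^sub>m(t)\<close> satisfies
  \<open>\<mu>\<^sub>\<Gamma>\<^sub>+\<^sub>1 / (\<Gamma>+1) \<ge> 1/t\<close>. With \<open>j = \<lfloor>\<Gamma>/2\<rfloor>\<close>, monotonicity of \<mu> and \<open>\<mu>\<^sub>2\<^sub>k \<le> A \<nu>\<^sub>k\<close> give
  \<open>\<nu>\<^sub>j\<^sub>+\<^sub>1 / (j+1) \<ge> \<mu>\<^sub>\<Gamma>\<^sub>+\<^sub>1 / (A (\<Gamma>+1)) \<ge> 1/(At)\<close>, and the comparison of \<nu> with \<lambda>, needed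
  only on the diagonal \<open>j = k\<close>, yields \<open>\<lambda>\<^sub>j\<^sub>+\<^sub>1 / (j+1) \<ge> 1/(ACt)\<close>. Hence \<open>\<underline>\<Gamma>\<^sub>\<ell>(Dt) \<le> j\<close>
  for \<open>D = max 1 (AC)\<close>, and \<open>2j \<le> \<Gamma>\<close>.\<close>

lemma weight_sequence_mono:
  assumes "weight_sequence \<mu>" "i \<le> j"
  shows "\<mu> i \<le> \<mu> j"
  using assms lift_Suc_mono_le[of \<mu>] unfolding weight_sequence_def by blast

lemma weight_sequence_ge_1:
  assumes "weight_sequence \<mu>"
  shows "\<mu> i \<ge> 1"
  using weight_sequence_mono[OF assms, of 0 i] assms unfolding weight_sequence_def by simp

lemma Mseq_pos:
  assumes "weight_sequence \<mu>"
  shows "Mseq \<mu> k > 0"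
  unfolding Mseq_def using weight_sequence_ge_1[OF assms]
  by (intro prod_pos) (auto intro: less_le_trans[of 0 1])

lemma mseq_pos:
  assumes "weight_sequence \<mu>"
  shows "mseq \<mu> k > 0"
  unfolding mseq_def using Mseq_pos[OF assms] by simp

lemma mseq_0:
  assumes "weight_sequence \<mu>"
  shows "mseq \<mu> 0 = 1"
  using assms unfolding mseq_def Mseq_def weight_sequence_def by simp

lemma mseq_Suc_ratio:
  assumes "weight_sequence \<mu>"
  shows "mseq \<mu> (Suc k) / mseq \<mu> k = \<mu> (Suc k) / real (Suc k)"
proof -
  have "Mseq \<mu> (Suc k) = Mseq \<mu> k * \<mu> (Suc k)"
    unfolding Mseq_def by simp
  moreover have "fact (Suc k) = real (Suc k) * (fact k :: real)"
    by simp
  ultimately show ?thesis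
    unfolding mseq_def using Mseq_pos[OF assms, of k] by (simp add: divide_simps)
qed

lemma ex_ratio_ge_if_root_tendsto_infinity:
  fixes m :: "nat \<Rightarrow> real"
  assumes m0: "m 0 \<le> 1" and pos: "\<And>k. m k > 0"
    and root: "filterlim (\<lambda>k. root k (m k)) at_top sequentially" and t: "t > 0"
  shows "\<exists>k. 1 / t \<le> m (Suc k) / m k"
proof (rule ccontr)
  assume "\<not> ?thesis"
  then have "m (Suc k) / m k < 1 / t" for k
    by (simp add: not_le)
  then have step: "m (Suc k) \<le> (1 / t) * m k" for k
    using pos[of k] by (metis less_imp_le pos_divide_less_eq)
  have geometric: "m k \<le> (1 / t) ^ k" for k
  proof (induction k)
    case 0
    then show ?case using m0 by simp
  next
    case (Suc k)
    have "m (Suc k) \<le> (1 / t) * m k" by (rule step)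
    also have "\<dots> \<le> (1 / t) * (1 / t) ^ k" using Suc t by (intro mult_left_mono) auto
    finally show ?case by simp
  qed
  have "eventually (\<lambda>k. 1 / t < root k (m k) \<and> k \<ge> 1) sequentially"
    using root[unfolded filterlim_at_top_dense] eventually_ge_at_top[of 1]
    using eventually_conj by blast
  then obtain k where k: "1 / t < root k (m k)" "k \<ge> 1"
    by (auto simp: eventually_sequentially)
  have "root k (m k) \<le> root k ((1 / t) ^ k)"
    using geometric[of k] k(2) by (subst real_root_le_iff) auto
  also have "\<dots> = 1 / t"
    using k(2) t by (simp add: real_root_pos2)
  finally show False using k(1) by simp
qed

lemma Gamma_low_ratio_ge:
  fixes m :: "nat \<Rightarrow> real"
  assumes "m 0 \<le> 1" "\<And>k. m k > 0"
    and "filterlim (\<lambda>k. root k (m k)) at_top sequentially" "t > 0"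
  shows "1 / t \<le> m (Suc (Gamma_low m t)) / m (Gamma_low m t)"
  unfolding Gamma_low_def
  using ex_ratio_ge_if_root_tendsto_infinity[OF assms] by (rule LeastI_ex)

lemma Gamma_low_le:
  "1 / t \<le> m (Suc k) / m k \<Longrightarrow> Gamma_low m t \<le> k"
  unfolding Gamma_low_def by (rule Least_le)

lemma quotient_half_index_ge:
  assumes w: "weight_sequence \<mu>" and A: "A > 0" "\<And>k. \<mu> (2 * k) \<le> A * \<nu> k"
    and t: "t > 0" and k: "1 / t \<le> \<mu> (Suc k) / real (Suc k)"
  shows "1 / (A * t) \<le> \<nu> (Suc (k div 2)) / real (Suc (k div 2))"
proof -
  define j where "j = k div 2"
  have "real (Suc k) / t \<le> \<mu> (Suc k)"
    using k t by (simp add: field_simps)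
  also have "\<dots> \<le> \<mu> (2 * Suc j)"
    using weight_sequence_mono[OF w] unfolding j_def by simp
  also have "\<dots> \<le> A * \<nu> (Suc j)"
    by (rule A(2))
  finally have "real (Suc k) / (A * t) \<le> \<nu> (Suc j)"
    using A(1) t by (simp add: field_simps)
  moreover have "real (Suc j) / (A * t) \<le> real (Suc k) / (A * t)"
    using A(1) t unfolding j_def by (intro divide_right_mono) auto
  ultimately have "real (Suc j) / (A * t) \<le> \<nu> (Suc j)"
    by linarith
  then show ?thesis
    unfolding j_def[symmetric] by (simp add: field_simps)
qed

theorem lemma3p4:
  fixes mu nu la :: "nat \<Rightarrow> real"
  assumes wM: "weight_sequence mu" and wN: "weight_sequence nu" and wL: "weight_sequence la"
    and gm: "filterlim (\<lambda>k. root k (mseq mu k)) at_top sequentially"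
    and gn: "filterlim (\<lambda>k. root k (mseq nu k)) at_top sequentially"
    and gl: "filterlim (\<lambda>k. root k (mseq la k)) at_top sequentially"
    and hA: "\<exists>A>0. \<forall>k. mu (2 * k) \<le> A * nu k"
    and hC: "\<exists>C\<ge>1. \<forall>j k. 1 \<le> j \<and> j \<le> k \<longrightarrow> nu j / real j \<le> C * (la k / real k)"
  shows "\<exists>D\<ge>1. \<forall>t>0. 2 * Gamma_low (mseq la) (D * t) \<le> Gamma_low (mseq mu) t"
proof -
  obtain A where A: "A > 0" "\<And>k. mu (2 * k) \<le> A * nu k"
    using hA by auto
  obtain C where C: "C \<ge> 1" "\<And>j. j \<ge> 1 \<Longrightarrow> nu j / real j \<le> C * (la j / real j)"
    using hC by auto
  define D where "D = max 1 (A * C)"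
  have "2 * Gamma_low (mseq la) (D * t) \<le> Gamma_low (mseq mu) t" if t: "t > 0" for t
  proof -
    define k where "k = Gamma_low (mseq mu) t"
    have "1 / t \<le> mu (Suc k) / real (Suc k)"
      using Gamma_low_ratio_ge[OF _ mseq_pos[OF wM] gm t] mseq_0[OF wM]
      unfolding k_def mseq_Suc_ratio[OF wM] by simp
    then have "1 / (A * t) \<le> nu (Suc (k div 2)) / real (Suc (k div 2))"
      by (rule quotient_half_index_ge[OF wM A t])
    also have "\<dots> \<le> C * (la (Suc (k div 2)) / real (Suc (k div 2)))"
      by (rule C(2)) simp
    finally have "1 / (A * t) / C \<le> C * (la (Suc (k div 2)) / real (Suc (k div 2))) / C"
      using C(1) by (intro divide_right_mono) auto
    then have "1 / (A * C * t) \<le> la (Suc (k div 2)) / real (Suc (k div 2))"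
      using C(1) by (simp add: mult.commute mult.left_commute)
    moreover have "1 / (D * t) \<le> 1 / (A * C * t)"
      using A(1) C(1) t unfolding D_def
      by (intro divide_left_mono mult_right_mono mult_pos_pos) auto
    ultimately have "Gamma_low (mseq la) (D * t) \<le> k div 2"
      by (intro Gamma_low_le) (simp add: mseq_Suc_ratio[OF wL])
    then show ?thesis
      unfolding k_def by linarith
  qed
  then show ?thesis
    unfolding D_def by (meson max.cobounded1)
qed

end
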